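(* Consider a single-item auction setting with a feature space $\mathcal{Z}$, $n$ buyers each with unit demand and a single seller with supply $\lambda > 0$ and cost $c = 0$. Conditioned on each feature vector $z$, the buyers' bids $b_1,\dots,b_n$ are independent with $b_i \sim F_i^z$. For a pricing policy $p:\mathcal{Z}\to\mathbb{R}$ the clearing loss is $$\ell^c(p,z,\mathbf{b},c) = \sum_{i=1}^n \max\{b_i - p(z),0\} + \lambda \max\{p(z)-c,0\}.$$ Let $p$ be the pricing policy minimizing the expected clearing loss (i.e., for each $z$, $p(z)$ solves $\sum_{i=1}^n (1-F_i^z(p(z))) = \lambda$). Then the expected match rate under $p$ is at least $1-e^{-\lambda}$, where the match rate at price $p$ on a data point is ${\sf MR}(p) = \mathbf{1}[b^{(1)} \ge \max\{p,c\}]$ with $b^{(1)} = \max_i b_i$ the highest bid.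
   Context: $\mathbf{1}[\cdot]$ is the indicator function. The match rate is the indicator that the item is sold in a second-price auction with reserve price $\max\{p,c\}$. *)

theory Defs
  imports "HOL-Probability.Probability"
begin

definition match_rate :: "real \<Rightarrow> real \<Rightarrow> nat \<Rightarrow> (nat \<Rightarrow> real) \<Rightarrow> real" where
  "match_rate p c n b = (if max p c \<le> Max (b ` {..<n}) then 1 else 0)"

definition clearing_loss :: "real \<Rightarrow> real \<Rightarrow> nat \<Rightarrow> (nat \<Rightarrow> real) \<Rightarrow> real \<Rightarrow> real" where
  "clearing_loss lam pz n b c = (\<Sum>i<n. max (b i - pz) 0) + lam * max (pz - c) 0"

end

theory Submission
  imports Defs
begin

(* For a fixed feature vector z the item stays unsold iff every bid lies below the reserve
   max (p z) 0. Bids are independent and nonnegative, so this has probability at most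
   \<Prod>i. F_i(p z) = \<Prod>i. (1 - (1 - F_i(p z))), and 1 - x \<le> exp (- x) bounds the product by
   exp (- \<Sum>i. (1 - F_i(p z))) = exp (- lam). *)

lemma borel_measurable_match_rate[measurable]:
  assumes [measurable]: "q \<in> borel_measurable M" "c \<in> borel_measurable M"
    and [measurable]: "b \<in> M \<rightarrow>\<^sub>M PiM {..<n} (\<lambda>_. borel)"
  shows "(\<lambda>x. match_rate (q x) (c x) n (b x)) \<in> borel_measurable M"
  unfolding match_rate_def by measurable

lemma match_rate_eq_indicator_PiE:
  assumes "n \<ge> 1" "b \<in> extensional {..<n}"
  shows "match_rate q c n b = 1 - indicator (Pi\<^sub>E {..<n} (\<lambda>_. {..<max q c})) b"
proof -
  have "max q c \<le> Max (b ` {..<n}) \<longleftrightarrow> (\<exists>i<n. max q c \<le> b i)"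
    using assms(1) by (subst Max_ge_iff) (auto simp: lessThan_empty_iff)
  then show ?thesis
    using assms(2) by (auto simp: match_rate_def indicator_def PiE_iff not_less)
qed

lemma integral_match_rate_PiM:
  fixes F :: "nat \<Rightarrow> real measure"
  assumes "n \<ge> 1"
    and prob: "\<And>i. i < n \<Longrightarrow> prob_space (F i)"
    and sets: "\<And>i. i < n \<Longrightarrow> sets (F i) = sets borel"
  shows "(\<integral>b. match_rate q c n b \<partial>PiM {..<n} F) = 1 - (\<Prod>i<n. measure (F i) {..<max q c})"
proof -
  let ?M = "PiM {..<n} F" and ?E = "Pi\<^sub>E {..<n} (\<lambda>_. {..<max q c})"
  interpret M: prob_space ?M
    using prob by (intro prob_space_PiM) auto
  have E: "?E \<in> sets ?M"
    using sets by (intro sets_PiM_I_finite) auto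
  have "prod_emb {..<n} F {..<n} ?E = ?E"
    by (rule prod_emb_PiE_same_index) (simp add: sets_eq_imp_space_eq[OF sets])
  then have "emeasure ?M ?E = (\<Prod>i<n. emeasure (F i) {..<max q c})"
    using emeasure_PiM_emb[of "{..<n}" F "{..<n}" "\<lambda>_. {..<max q c}"] prob sets by simp
  then have measure_E: "measure ?M ?E = (\<Prod>i<n. measure (F i) {..<max q c})"
    using prob by (simp add: M.emeasure_eq_measure prob_space.measure_le_1 prob_space_def
        finite_measure.emeasure_eq_measure prod_ennreal prod_nonneg)
  have "(\<integral>b. match_rate q c n b \<partial>?M) = (\<integral>b. 1 - indicator ?E b \<partial>?M)"
    using assms(1)
    by (intro Bochner_Integration.integral_cong refl) (simp add: match_rate_eq_indicator_PiE space_PiM PiE_def)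
  also have "\<dots> = 1 - measure ?M ?E"
    using E by (subst Bochner_Integration.integral_diff) (auto simp: M.emeasure_eq_measure M.prob_space)
  finally show ?thesis
    unfolding measure_E .
qed

lemma measure_lessThan_max_zero_le_cdf:
  fixes M :: "real measure"
  assumes "finite_measure M" "sets M = sets borel" "AE x in M. 0 \<le> x"
  shows "measure M {..<max q 0} \<le> cdf M q"
proof (cases "0 \<le> q")
  case True
  have "measure M {..<q} \<le> measure M {..q}"
    by (rule finite_measure.finite_measure_mono[OF assms(1)]) (auto simp: assms(2))
  with True show ?thesis
    by (simp add: cdf_def)
next
  case False
  have "{..<0} \<in> null_sets M"
    using AE_iff_null_sets[of "{..<0}" M] assms(2,3) by (simp add: not_less)
  then have "measure M {..<0} = 0"
    by (simp add: measure_def null_setsD1)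
  with False show ?thesis
    by (simp add: cdf_def)
qed

lemma prod_one_minus_le_exp_neg_sum:
  fixes x :: "'a \<Rightarrow> real"
  assumes "\<And>i. i \<in> I \<Longrightarrow> x i \<le> 1"
  shows "(\<Prod>i\<in>I. 1 - x i) \<le> exp (- sum x I)"
proof (cases "finite I")
  case True
  have "(\<Prod>i\<in>I. 1 - x i) \<le> (\<Prod>i\<in>I. exp (- x i))"
    using assms by (intro prod_mono) (auto simp: exp_ge_add_one_self[of "- x _", simplified])
  also have "\<dots> = exp (- sum x I)"
    using True by (simp add: exp_sum sum_negf[symmetric])
  finally show ?thesis .
qed simp

lemma borel_measurable_integral_subprob_algebra2:
  fixes f :: "'a \<Rightarrow> 'b \<Rightarrow> real"
  assumes f[measurable]: "(\<lambda>(x, y). f x y) \<in> borel_measurable (M \<Otimes>\<^sub>M N)"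
    and L[measurable]: "L \<in> M \<rightarrow>\<^sub>M subprob_algebra N"
    and nonneg: "\<And>x y. 0 \<le> f x y"
  shows "(\<lambda>x. \<integral>y. f x y \<partial>L x) \<in> borel_measurable M"
proof -
  have "(\<lambda>x. \<integral>\<^sup>+ y. ennreal (f x y) \<partial>L x) \<in> borel_measurable M"
    by (rule nn_integral_measurable_subprob_algebra2[OF _ L]) measurable
  then have nn_integral: "(\<lambda>x. enn2real (\<integral>\<^sup>+ y. ennreal (f x y) \<partial>L x)) \<in> borel_measurable M"
    by measurable
  have "(\<integral>y. f x y \<partial>L x) = enn2real (\<integral>\<^sup>+ y. ennreal (f x y) \<partial>L x)" if "x \<in> space M" for x
  proof -
    have "sets (L x) = sets N"
      using measurable_space[OF L that] by (simp add: space_subprob_algebra)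
    from measurable_cong_sets[OF this refl[of "sets (borel :: real measure)"]]
    have "f x \<in> borel_measurable (L x)"
      using measurable_Pair2[OF f that] by simp
    then show ?thesis
      by (simp add: integral_eq_nn_integral nonneg)
  qed
  then show ?thesis
    by (rule measurable_cong[THEN iffD2, OF _ nn_integral])
qed

lemma integral_match_rate_PiM_ge:
  fixes F :: "nat \<Rightarrow> real measure"
  assumes "n \<ge> 1"
    and prob: "\<And>i. i < n \<Longrightarrow> prob_space (F i)"
    and sets: "\<And>i. i < n \<Longrightarrow> sets (F i) = sets borel"
    and nonneg: "\<And>i. i < n \<Longrightarrow> AE x in F i. 0 \<le> x"
    and clearing: "(\<Sum>i<n. 1 - cdf (F i) q) = lam"
  shows "1 - exp (- lam) \<le> (\<integral>b. match_rate q 0 n b \<partial>PiM {..<n} F)"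
proof -
  have "(\<Prod>i<n. measure (F i) {..<max q 0}) \<le> (\<Prod>i<n. 1 - (1 - cdf (F i) q))"
    using prob sets nonneg
    by (intro prod_mono) (simp add: measure_lessThan_max_zero_le_cdf prob_space_def)
  also have "\<dots> \<le> exp (- lam)"
    unfolding clearing[symmetric] by (rule prod_one_minus_le_exp_neg_sum) (simp add: cdf_def)
  finally show ?thesis
    using assms(1) prob sets by (simp add: integral_match_rate_PiM)
qed

theorem mainTheorem2:
  fixes Z :: "'z measure"
    and F :: "'z \<Rightarrow> nat \<Rightarrow> real measure"
    and p :: "'z \<Rightarrow> real"
    and n :: nat
    and lam :: real
  assumes "prob_space Z"
    and "n \<ge> 1"
    and "lam > 0"
    and "\<And>z i. z \<in> space Z \<Longrightarrow> i < n \<Longrightarrow> prob_space (F z i)"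
    and "\<And>z i. z \<in> space Z \<Longrightarrow> i < n \<Longrightarrow> sets (F z i) = sets borel"
    and "\<And>z i. z \<in> space Z \<Longrightarrow> i < n \<Longrightarrow> AE x in F z i. 0 \<le> x"
    and "(\<lambda>z. PiM {..<n} (F z)) \<in> Z \<rightarrow>\<^sub>M subprob_algebra (PiM {..<n} (\<lambda>_. borel))"
    and "p \<in> borel_measurable Z"
    and "\<And>z. z \<in> space Z \<Longrightarrow> (\<Sum>i<n. 1 - cdf (F z i) (p z)) = lam"
  shows "1 - exp (- lam) \<le>
           (\<integral>z. (\<integral>b. match_rate (p z) 0 n b \<partial>(PiM {..<n} (F z))) \<partial>Z)"
proof -
  interpret Z: prob_space Z by fact
  note [measurable] = assms(8)
  define g where "g z = (\<integral>b. match_rate (p z) 0 n b \<partial>(PiM {..<n} (F z)))" for z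
  have lower: "1 - exp (- lam) \<le> g z" if "z \<in> space Z" for z
    unfolding g_def using assms(2,4-6,9) that by (intro integral_match_rate_PiM_ge) auto
  have upper: "g z \<le> 1" if "z \<in> space Z" for z
    unfolding g_def using assms(2,4,5) that
    by (subst integral_match_rate_PiM) (auto intro!: prod_nonneg)
  have "(\<lambda>(z, b). match_rate (p z) 0 n b) \<in> borel_measurable (Z \<Otimes>\<^sub>M PiM {..<n} (\<lambda>_. borel))"
    unfolding case_prod_beta by measurable
  then have "g \<in> borel_measurable Z"
    unfolding g_def[abs_def]
    by (rule borel_measurable_integral_subprob_algebra2[OF _ assms(7)]) (simp add: match_rate_def)
  moreover have "norm (g z) \<le> 1" if "z \<in> space Z" for z
  proof -
    have "exp (- lam) < 1"
      using \<open>lam > 0\<close> by simp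
    with lower[OF that] upper[OF that] show ?thesis
      unfolding real_norm_def by arith
  qed
  ultimately have "integrable Z g"
    by (intro Z.integrable_const_bound[where B=1] AE_I2)
  then show ?thesis
    using lower unfolding g_def by (intro Z.integral_ge_const AE_I2)
qed

end
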